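(* Let $P$ be a path producible by a tile assembly system $\mathcal T=(T,\sigma,1)$ such that the last glue of $P$ (the glue between $P_{|P|-2}$ and $P_{|P|-1}$) is visible from the north. Let $i,j\in\{0,1,\dots,|P|-2\}$. If the glues $\mathrm{glue}_P(i)$ and $\mathrm{glue}_P(j)$ are both visible from the south, $\mathrm{glue}_P(i)$ points east and $x_{P_i}<x_{P_j}$, then $i<j$ and $\mathrm{glue}_P(j)$ points east. Symmetrically, if both are visible from the south, $\mathrm{glue}_P(i)$ points west and $x_{P_i}>x_{P_j}$, then $i<j$ and $\mathrm{glue}_P(j)$ points west.
   Context: Abstract Tile Assembly Model (aTAM) at temperature 1: $T$ is a finite set of tile types (unit squares with a glue type and nonnegative strength on each side); a tile is a pair $((x,y),t)\in\mathbb Z^2\times T$; two adjacent tiles interact if their abutting glues have equal type and strength $\ge1$; a tile assembly system $\mathcal T=(T,\sigma,1)$ has a finite connected seed assembly $\sigma$, and producible assemblies are grown from $\sigma$ by repeatedly adding a single tile that interacts with at least one existing tile. A path is a sequence $P=P_0P_1\dots$ of tiles with pairwise distinct positions, consecutive ones adjacent and interacting; $x_{P_i},y_{P_i}$ are the coordinates of $P_i$. $P$ is producible if its tiles avoid the positions of $\sigma$, $\sigma\cup\{P_0,P_1,\dots\}$ is producible and $P_0$ interacts with a tile of $\sigma$. For $0\le i\le |P|-2$, $\mathrm{glue}_P(i)$ is the glue shared by $P_i$ and $P_{i+1}$; its type is the common glue type, its position is the midpoint of the segment from $\mathrm{pos}(P_i)$ to $\mathrm{pos}(P_{i+1})$;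 it points east, west, north or south according as $\mathrm{pos}(P_{i+1})-\mathrm{pos}(P_i)$ is $(1,0),(-1,0),(0,1),(0,-1)$. The embedding $\mathrm{emb}(P)$ is the polygonal curve through $\mathrm{pos}(P_0),\mathrm{pos}(P_1),\dots$ in order. A glue pointing east or west is visible from the south (resp. north) if the vertical ray starting at its position and going down (resp. up) intersects neither $\mathrm{emb}(P)$ nor $\sigma$ (i.e., neither a tile position of $\sigma$ nor a unit segment joining two adjacent tile positions of $\sigma$). *)

theory Defs
  imports "HOL-Analysis.Analysis"
begin

datatype dir = North | East | South | West

type_synonym pos = "int \<times> int"
(* a tile type: on each side a glue, i.e. a glue type (label) and a nonnegative strength *)
type_synonym 'g tiletype = "dir \<Rightarrow> 'g \<times> nat"
type_synonym 'g tile = "pos \<times> 'g tiletype"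
type_synonym 'g assembly = "pos \<Rightarrow> 'g tiletype option"

fun dir_vec :: "dir \<Rightarrow> pos" where
  "dir_vec North = (0, 1)"
| "dir_vec East = (1, 0)"
| "dir_vec South = (0, -1)"
| "dir_vec West = (-1, 0)"

fun opp :: "dir \<Rightarrow> dir" where
  "opp North = South"
| "opp East = West"
| "opp South = North"
| "opp West = East"

definition shift :: "pos \<Rightarrow> dir \<Rightarrow> pos" where
  "shift p d = (fst p + fst (dir_vec d), snd p + snd (dir_vec d))"

definition adjacent :: "pos \<Rightarrow> pos \<Rightarrow> bool" where
  "adjacent p q \<longleftrightarrow> (\<exists>d. q = shift p d)"

definition interacts :: "'g tile \<Rightarrow> 'g tile \<Rightarrow> bool" where
  "interacts a b \<longleftrightarrow>
     (\<exists>d. fst b = shift (fst a) d \<and> snd a d = snd b (opp d) \<and> snd (snd a d) \<ge> 1)"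

inductive producible :: "'g tiletype set \<Rightarrow> 'g assembly \<Rightarrow> 'g assembly \<Rightarrow> bool"
  for T :: "'g tiletype set" and \<sigma> :: "'g assembly" where
  seed: "producible T \<sigma> \<sigma>"
| step: "\<lbrakk> producible T \<sigma> \<alpha>; \<alpha> p = None; t \<in> T; \<alpha> q = Some u; interacts (p, t) (q, u) \<rbrakk>
         \<Longrightarrow> producible T \<sigma> (\<alpha>(p \<mapsto> t))"

definition seed_bond :: "'g assembly \<Rightarrow> (pos \<times> pos) set" where
  "seed_bond \<sigma> = {(p, q). \<exists>t u. \<sigma> p = Some t \<and> \<sigma> q = Some u \<and> interacts (p, t) (q, u)}"

definition is_tas :: "'g tiletype set \<Rightarrow> 'g assembly \<Rightarrow> bool" where
  "is_tas T \<sigma> \<longleftrightarrow> finite T \<and> finite (dom \<sigma>) \<and>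
     (\<forall>p\<in>dom \<sigma>. \<forall>q\<in>dom \<sigma>. (p, q) \<in> (seed_bond \<sigma>)\<^sup>*)"

definition is_path :: "'g tile list \<Rightarrow> bool" where
  "is_path P \<longleftrightarrow> distinct (map fst P) \<and>
     (\<forall>k. Suc k < length P \<longrightarrow> interacts (P ! k) (P ! Suc k))"

definition producible_path :: "'g tiletype set \<Rightarrow> 'g assembly \<Rightarrow> 'g tile list \<Rightarrow> bool" where
  "producible_path T \<sigma> P \<longleftrightarrow> is_path P \<and> P \<noteq> [] \<and>
     (\<forall>k < length P. fst (P ! k) \<notin> dom \<sigma>) \<and>
     producible T \<sigma> (\<sigma> ++ map_of P) \<and>
     (\<exists>q u. \<sigma> q = Some u \<and> interacts (q, u) (P ! 0))"

definition rp :: "pos \<Rightarrow> real \<times> real" where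
  "rp p = (of_int (fst p), of_int (snd p))"

definition emb :: "'g tile list \<Rightarrow> (real \<times> real) set" where
  "emb P = rp ` fst ` set P \<union>
     (\<Union>k \<in> {k. Suc k < length P}. closed_segment (rp (fst (P ! k))) (rp (fst (P ! Suc k))))"

definition seed_set :: "'g assembly \<Rightarrow> (real \<times> real) set" where
  "seed_set \<sigma> = rp ` dom \<sigma> \<union>
     \<Union> {closed_segment (rp p) (rp q) | p q. p \<in> dom \<sigma> \<and> q \<in> dom \<sigma> \<and> adjacent p q}"

definition glue_pos :: "'g tile list \<Rightarrow> nat \<Rightarrow> real \<times> real" where
  "glue_pos P k = midpoint (rp (fst (P ! k))) (rp (fst (P ! Suc k)))"

definition glue_points :: "dir \<Rightarrow> 'g tile list \<Rightarrow> nat \<Rightarrow> bool" where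
  "glue_points d P k \<longleftrightarrow> fst (P ! Suc k) = shift (fst (P ! k)) d"

(* the ray starts at the glue position (excluded, as it lies on emb(P)) *)
definition visible_south :: "'g assembly \<Rightarrow> 'g tile list \<Rightarrow> nat \<Rightarrow> bool" where
  "visible_south \<sigma> P k \<longleftrightarrow> (glue_points East P k \<or> glue_points West P k) \<and>
     (\<forall>t::real > 0. (fst (glue_pos P k), snd (glue_pos P k) - t) \<notin> emb P \<union> seed_set \<sigma>)"

definition visible_north :: "'g assembly \<Rightarrow> 'g tile list \<Rightarrow> nat \<Rightarrow> bool" where
  "visible_north \<sigma> P k \<longleftrightarrow> (glue_points East P k \<or> glue_points West P k) \<and>
     (\<forall>t::real > 0. (fst (glue_pos P k), snd (glue_pos P k) + t) \<notin> emb P \<union> seed_set \<sigma>)"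

end

theory Submission
  imports Defs
begin

text \<open>
  Double all coordinates, so that tiles and glues both become lattice points. Close the part of
  the path from glue \<open>h\<close> to the last glue into a curve by a ray going down from glue \<open>h\<close> and a
  ray going up from the last glue; visibility says exactly that neither ray meets the path.
  The parity of the number of crossings of this curve with a rightward horizontal ray from a
  point is constant along paths avoiding the curve and changes when the curve is crossed.
  The point just above tile \<open>P\<^sub>h\<close> therefore has parity \<open>1\<close> iff glue \<open>h\<close> points east. For
  \<open>l < h\<close> the points just above \<open>P\<^sub>l, \<dots>, P\<^sub>h\<close> are joined without crossing the curve (the path
  does not meet itself), and going down from glue \<open>l\<close>, which is visible from the south,
  reaches points far below the path, where the parity is \<open>1\<close> iff glue \<open>l\<close> is left of glue \<open>h\<close>.
  Hence glue \<open>h\<close> points east iff glue \<open>l\<close> is left of it, and the theorem follows by comparing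
  this for the pairs \<open>(i, j)\<close> and \<open>(j, i)\<close>.
\<close>

section \<open>Lattice paths in doubled coordinates\<close>

definition dglue :: "(int \<times> int) list \<Rightarrow> nat \<Rightarrow> int \<times> int" where
  "dglue ps m = (fst (ps!m) + fst (ps!Suc m), snd (ps!m) + snd (ps!Suc m))"

definition double :: "int \<times> int \<Rightarrow> int \<times> int" where
  "double p = (2 * fst p, 2 * snd p)"

definition lattice_path :: "(int \<times> int) list \<Rightarrow> bool" where
  "lattice_path ps \<longleftrightarrow> distinct ps \<and>
     (\<forall>m. Suc m < length ps \<longrightarrow> \<bar>fst (ps!Suc m) - fst (ps!m)\<bar> + \<bar>snd (ps!Suc m) - snd (ps!m)\<bar> = 1)"

definition visible_below :: "(int \<times> int) list \<Rightarrow> nat \<Rightarrow> bool" where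
  "visible_below ps m \<longleftrightarrow> snd (ps!Suc m) = snd (ps!m) \<and>
     (\<forall>n. Suc n < length ps \<longrightarrow> fst (dglue ps n) = fst (dglue ps m) \<longrightarrow> snd (dglue ps m) \<le> snd (dglue ps n))"

definition visible_above :: "(int \<times> int) list \<Rightarrow> nat \<Rightarrow> bool" where
  "visible_above ps m \<longleftrightarrow> snd (ps!Suc m) = snd (ps!m) \<and>
     (\<forall>n. Suc n < length ps \<longrightarrow> fst (dglue ps n) = fst (dglue ps m) \<longrightarrow> snd (dglue ps n) \<le> snd (dglue ps m))"

lemma unit_step_cases:
  fixes a b c d :: int
  assumes "\<bar>c - a\<bar> + \<bar>d - b\<bar> = 1"
  shows "(c = a + 1 \<and> d = b) \<or> (c = a - 1 \<and> d = b) \<or> (c = a \<and> d = b + 1) \<or> (c = a \<and> d = b - 1)"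
  using assms by arith

lemma lattice_path_step:
  "lattice_path ps \<Longrightarrow> Suc m < length ps \<Longrightarrow> \<bar>fst (ps!Suc m) - fst (ps!m)\<bar> + \<bar>snd (ps!Suc m) - snd (ps!m)\<bar> = 1"
  by (simp add: lattice_path_def)

lemma lattice_path_horizontal_step:
  "lattice_path ps \<Longrightarrow> Suc m < length ps \<Longrightarrow> snd (ps!Suc m) = snd (ps!m) \<Longrightarrow> \<bar>fst (ps!Suc m) - fst (ps!m)\<bar> = 1"
  using lattice_path_step by fastforce

lemma lattice_path_nth_inj:
  "lattice_path ps \<Longrightarrow> m < length ps \<Longrightarrow> n < length ps \<Longrightarrow> ps!m = ps!n \<Longrightarrow> m = n"
  by (simp add: lattice_path_def nth_eq_iff_index_eq)

text \<open>A glue determines its two tiles up to order, and consecutive tiles are distinct.\<close>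

lemma dglue_inj:
  assumes path: "lattice_path ps" and m: "Suc m < length ps" and n: "Suc n < length ps"
    and eq: "dglue ps m = dglue ps n"
  shows "m = n"
proof -
  obtain a b c d where 1: "ps!m = (a,b)" "ps!Suc m = (c,d)" by (cases "ps!m", cases "ps!Suc m") auto
  obtain a' b' c' d' where 2: "ps!n = (a',b')" "ps!Suc n = (c',d')" by (cases "ps!n", cases "ps!Suc n") auto
  have "\<bar>c - a\<bar> + \<bar>d - b\<bar> = 1" "\<bar>c' - a'\<bar> + \<bar>d' - b'\<bar> = 1"
    using lattice_path_step[OF path m] lattice_path_step[OF path n] 1 2 by simp_all
  moreover have "a + c = a' + c'" "b + d = b' + d'" using eq 1 2 by (auto simp: dglue_def)
  ultimately have "(ps!m = ps!n \<and> ps!Suc m = ps!Suc n) \<or> (ps!m = ps!Suc n \<and> ps!Suc m = ps!n)"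
    using unit_step_cases 1 2 by (smt (verit, best) prod.inject)
  then show ?thesis
  proof
    assume "ps!m = ps!n \<and> ps!Suc m = ps!Suc n"
    then show ?thesis using lattice_path_nth_inj[OF path] m n by simp
  next
    assume "ps!m = ps!Suc n \<and> ps!Suc m = ps!n"
    then have "m = Suc n" "Suc m = n" using lattice_path_nth_inj[OF path] m n by simp_all
    then show ?thesis by simp
  qed
qed

lemma odd_fst_dglue:
  "lattice_path ps \<Longrightarrow> Suc m < length ps \<Longrightarrow> snd (ps!Suc m) = snd (ps!m) \<Longrightarrow> odd (fst (dglue ps m))"
  using lattice_path_horizontal_step[of ps m] by (simp add: dglue_def) presburger

lemma snd_dglue_row: "snd (ps!Suc m) = snd (ps!m) \<Longrightarrow> snd (dglue ps m) = 2 * snd (ps!m)"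
  by (simp add: dglue_def)

lemma even_in_unit_strip:
  fixes a b c X :: int
  assumes "\<bar>b - a\<bar> = 1" "X = a + b \<or> X = 2 * b" "min (2 * a) X < 2 * c" "2 * c \<le> max (2 * a) X"
  shows "c = a \<or> (c = b \<and> X = 2 * b)"
proof -
  have "b = a + 1 \<or> b = a - 1" using assms(1) by linarith
  then show ?thesis using assms(2-4) by (auto simp: min_def max_def split: if_splits)
qed

lemma odd_in_unit_strip:
  fixes a b g X :: int
  assumes "\<bar>b - a\<bar> = 1" "X = a + b \<or> X = 2 * b" "odd g" "min (2 * a) X < g" "g \<le> max (2 * a) X"
  shows "g = a + b"
proof -
  obtain k where "g = 2 * k + 1" using \<open>odd g\<close> by (auto elim: oddE)
  moreover have "b = a + 1 \<or> b = a - 1" using assms(1) by linarith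
  ultimately show ?thesis using assms(2,4,5) by (auto simp: min_def max_def split: if_splits; presburger)
qed

section \<open>Crossing parity of axis-parallel walks\<close>

text \<open>
  For a walk through lattice points on even rows, with horizontal steps and vertical steps of
  length at most \<open>2\<close>: \<open>cross_row X lev u v\<close> indicates that the step \<open>u v\<close> crosses the odd row
  \<open>lev\<close> right of \<open>X\<close>, \<open>cross_col X r u v\<close> that it runs along the even row \<open>r\<close> across the column
  \<open>X + 1/2\<close>, and \<open>on_half_row X r v\<close> that \<open>v\<close> lies on row \<open>r\<close> right of \<open>X\<close>.
\<close>

definition cross_row :: "int \<Rightarrow> int \<Rightarrow> int \<times> int \<Rightarrow> int \<times> int \<Rightarrow> nat" where
  "cross_row X lev u v = (if X < fst u \<and> ((snd u < lev) \<noteq> (snd v < lev)) then 1 else 0)"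

definition cross_col :: "int \<Rightarrow> int \<Rightarrow> int \<times> int \<Rightarrow> int \<times> int \<Rightarrow> nat" where
  "cross_col X r u v = (if snd u = r \<and> snd v = r \<and> ((X < fst u) \<noteq> (X < fst v)) then 1 else 0)"

definition on_half_row :: "int \<Rightarrow> int \<Rightarrow> int \<times> int \<Rightarrow> nat" where
  "on_half_row X r v = (if X < fst v \<and> snd v = r then 1 else 0)"

text \<open>
  A step meets the boundary of the half strip right of \<open>X\<close> between the rows \<open>lev\<close> and
  \<open>lev + 2\<close> as often, modulo \<open>2\<close>, as it has endpoints inside it.
\<close>

lemma step_crossings_even:
  assumes "even (snd u)" "even (snd v)" "odd lev"
    and "snd u = snd v \<or> (fst u = fst v \<and> \<bar>snd u - snd v\<bar> \<le> 2)"
  shows "even (cross_row X lev u v + cross_row X (lev+2) u v + cross_col X (lev+1) u v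
               + on_half_row X (lev+1) u + on_half_row X (lev+1) v)"
proof -
  obtain a b c d where uv: "u = (a,b)" "v = (c,d)" by (cases u, cases v) auto
  show ?thesis
  proof (cases "b = d")
    case True then show ?thesis using uv by (auto simp: cross_row_def cross_col_def on_half_row_def)
  next
    case False
    then have "a = c" "\<bar>b - d\<bar> \<le> 2" using assms uv by auto
    moreover obtain b' d' where "b = 2*b'" "d = 2*d'" using assms uv by (auto elim!: evenE)
    moreover obtain l' where "lev = 2*l'+1" using assms by (auto elim!: oddE)
    ultimately show ?thesis using uv False by (auto simp: cross_row_def cross_col_def on_half_row_def)
  qed
qed

lemma even_sum_telescope:
  assumes "\<And>t. t < N \<Longrightarrow> even (a t + on_half_row X r (w t) + on_half_row X r (w (Suc t)))"
  shows "even ((\<Sum>t<N. a t) + on_half_row X r (w 0) + on_half_row X r (w N))"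
  using assms
proof (induction N)
  case (Suc N)
  then have "even ((\<Sum>t<N. a t) + on_half_row X r (w 0) + on_half_row X r (w N))"
    and "even (a N + on_half_row X r (w N) + on_half_row X r (w (Suc N)))" by auto
  then show ?case by (simp, presburger)
qed simp

text \<open>
  The walk is closed up by a ray going down from its start and a ray going up from its end;
  the first two and the next two summands count their crossings with the rows \<open>lev\<close> and
  \<open>lev + 2\<close>.
\<close>

lemma walk_crossings_row_shift:
  fixes w :: "nat \<Rightarrow> int \<times> int"
  assumes even_rows: "\<And>t. t \<le> N \<Longrightarrow> even (snd (w t))"
    and axis: "\<And>t. t < N \<Longrightarrow> snd (w t) = snd (w (Suc t))
                  \<or> (fst (w t) = fst (w (Suc t)) \<and> \<bar>snd (w t) - snd (w (Suc t))\<bar> \<le> 2)"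
    and lev: "odd lev"
  shows "even ((if X < fst (w 0) \<and> lev < snd (w 0) then 1 else 0)
      + (if X < fst (w 0) \<and> lev + 2 < snd (w 0) then 1 else 0)
      + (if X < fst (w N) \<and> snd (w N) < lev then 1 else 0)
      + (if X < fst (w N) \<and> snd (w N) < lev + 2 then 1 else 0)
      + (\<Sum>t<N. cross_row X lev (w t) (w (Suc t))) + (\<Sum>t<N. cross_row X (lev+2) (w t) (w (Suc t)))
      + (\<Sum>t<N. cross_col X (lev+1) (w t) (w (Suc t))) :: nat)"
proof -
  have steps: "even ((\<Sum>t<N. cross_row X lev (w t) (w (Suc t)) + cross_row X (lev+2) (w t) (w (Suc t))
                              + cross_col X (lev+1) (w t) (w (Suc t)))
                     + on_half_row X (lev+1) (w 0) + on_half_row X (lev+1) (w N))"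
    by (rule even_sum_telescope, rule step_crossings_even) (use even_rows axis lev in auto)
  have rays: "even ((if X < fst v \<and> lev < snd v then 1 else 0)
      + (if X < fst v \<and> lev + 2 < snd v then 1 else 0) + on_half_row X (lev+1) v :: nat)"
    "even ((if X < fst v \<and> snd v < lev then 1 else 0)
      + (if X < fst v \<and> snd v < lev + 2 then 1 else 0) + on_half_row X (lev+1) v :: nat)"
    if "even (snd v)" for v
    using that lev by (auto simp: on_half_row_def; presburger)+
  show ?thesis
    using steps rays(1)[OF even_rows[of 0]] rays(2)[OF even_rows[of N]] unfolding sum.distrib by simp presburger
qed

section \<open>The curve through a glue visible from below and the last glue\<close>

locale visible_glue_curve =
  fixes ps :: "(int \<times> int) list" and h :: nat
  assumes path: "lattice_path ps"
    and len: "2 \<le> length ps"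
    and h_le: "h \<le> length ps - 2"
    and vis_h: "visible_below ps h"
    and vis_last: "visible_above ps (length ps - 2)"
begin

definition "K = length ps - 2"
definition "N = K - h + 1"

definition "walk t = (if t = 0 then dglue ps h else if t \<le> K - h then double (ps!(h+t)) else dglue ps K)"

text \<open>
  \<open>crossings X lev\<close> counts the crossings of the ray going right from \<open>(X, lev)\<close>, for odd \<open>lev\<close>,
  with the walk closed up by the ray going down from its start and the ray going up from its end.
\<close>

definition "crossings X lev = (if X < fst (dglue ps h) \<and> lev < snd (dglue ps h) then 1 else 0)
   + (if X < fst (dglue ps K) \<and> snd (dglue ps K) < lev then 1 else 0)
   + (\<Sum>t<N. cross_row X lev (walk t) (walk (Suc t)))"

definition "row_hits X r = (\<Sum>t<N. cross_col X r (walk t) (walk (Suc t)))"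

lemma h_le_K: "h \<le> K" and Suc_K_less: "Suc K < length ps"
  using h_le len by (auto simp: K_def)

lemma step_K: "m \<le> K \<Longrightarrow> \<bar>fst (ps!Suc m) - fst (ps!m)\<bar> + \<bar>snd (ps!Suc m) - snd (ps!m)\<bar> = 1"
  using lattice_path_step[OF path] Suc_K_less by auto

lemma row_h: "snd (ps!Suc h) = snd (ps!h)" and row_K: "snd (ps!Suc K) = snd (ps!K)"
  using vis_h vis_last by (auto simp: visible_below_def visible_above_def K_def)

lemma below_h: "Suc m < length ps \<Longrightarrow> fst (dglue ps m) = fst (dglue ps h) \<Longrightarrow> snd (dglue ps h) \<le> snd (dglue ps m)"
  using vis_h by (simp add: visible_below_def)

lemma above_K: "Suc m < length ps \<Longrightarrow> fst (dglue ps m) = fst (dglue ps K) \<Longrightarrow> snd (dglue ps m) \<le> snd (dglue ps K)"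
  using vis_last by (simp add: visible_above_def K_def)

lemma dglue_K_inj: "m \<le> K \<Longrightarrow> n \<le> K \<Longrightarrow> dglue ps m = dglue ps n \<Longrightarrow> m = n"
  using dglue_inj[OF path] Suc_K_less by simp

lemma dglue_h: "dglue ps h = (fst (ps!h) + fst (ps!Suc h), 2 * snd (ps!h))"
  using row_h by (simp add: dglue_def)

lemma dglue_K: "dglue ps K = (fst (ps!K) + fst (ps!Suc K), 2 * snd (ps!K))"
  using row_K by (simp add: dglue_def)

lemma odd_fst_dglue_K: "odd (fst (dglue ps K))"
  using odd_fst_dglue[OF path Suc_K_less row_K] .

lemma walk_0: "walk 0 = dglue ps h" by (simp add: walk_def)
lemma walk_N: "walk N = dglue ps K" by (simp add: walk_def N_def)

lemma walk_step_cases: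
  assumes "t < N"
  obtains (first) "t = 0" "h < K" "walk t = dglue ps h" "walk (Suc t) = double (ps!Suc h)"
    | (inner) "0 < t" "h + t < K" "walk t = double (ps!(h+t))" "walk (Suc t) = double (ps!Suc (h+t))"
    | (final) "0 < t" "h + t = K" "walk t = double (ps!K)" "walk (Suc t) = dglue ps K"
    | (single) "t = 0" "h = K" "walk t = dglue ps h" "walk (Suc t) = dglue ps K"
proof -
  consider "t = 0" "h < K" | "0 < t" "h + t < K" | "0 < t" "h + t = K" | "t = 0" "h = K"
    using assms h_le_K by (auto simp: N_def) linarith
  then show ?thesis
  proof cases
    case 1
    then show ?thesis by (rule first) (use 1 in \<open>auto simp: walk_def\<close>)+
  next
    case 2
    then show ?thesis by (rule inner) (use 2 in \<open>auto simp: walk_def\<close>)+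
  next
    case 3
    then have "K - h = t" by simp
    show ?thesis by (rule final) (use 3 \<open>K - h = t\<close> in \<open>auto simp: walk_def\<close>)+
  next
    case 4
    then have "K - h = 0" by simp
    then show ?thesis using single[OF 4] by (simp add: walk_def \<open>t = 0\<close>)
  qed
qed

lemma walk_even_rows: "t \<le> N \<Longrightarrow> even (snd (walk t))"
  by (auto simp: walk_def dglue_h dglue_K double_def)

lemma walk_axis_parallel:
  assumes "t < N"
  shows "snd (walk t) = snd (walk (Suc t))
    \<or> (fst (walk t) = fst (walk (Suc t)) \<and> \<bar>snd (walk t) - snd (walk (Suc t))\<bar> \<le> 2)"
  using assms
proof (cases rule: walk_step_cases)
  case inner
  moreover have "\<bar>fst (ps!Suc (h+t)) - fst (ps!(h+t))\<bar> + \<bar>snd (ps!Suc (h+t)) - snd (ps!(h+t))\<bar> = 1"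
    using step_K inner by simp
  ultimately show ?thesis by (auto simp: double_def)
qed (auto simp: dglue_h dglue_K double_def row_h row_K)

lemma crossings_row_shift:
  assumes "odd lev"
  shows "even (crossings X lev + crossings X (lev+2) + row_hits X (lev+1))"
  using walk_crossings_row_shift[where w = walk and N = N and X = X and lev = lev,
      OF walk_even_rows walk_axis_parallel assms]
  unfolding crossings_def row_hits_def walk_0 walk_N by (simp add: algebra_simps)

lemma row_hit_odd_col:
  assumes t: "t < N" and X: "odd X" and hit: "cross_col X r (walk t) (walk (Suc t)) \<noteq> 0"
  shows "dglue ps (h+t) = (X, r)"
  using t
proof (cases rule: walk_step_cases)
  case first
  have "\<bar>fst (ps!Suc h) - fst (ps!h)\<bar> = 1" using step_K[of h] first row_h by simp
  then show ?thesis using first hit X unfolding cross_col_def dglue_h double_def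
    by (auto simp: dglue_h split: if_splits; presburger?)
next
  case inner
  have "\<bar>fst (ps!Suc (h+t)) - fst (ps!(h+t))\<bar> + \<bar>snd (ps!Suc (h+t)) - snd (ps!(h+t))\<bar> = 1"
    using step_K inner by simp
  then show ?thesis using inner hit X unfolding cross_col_def dglue_def double_def
    by (auto split: if_splits; presburger?)
next
  case final
  have "\<bar>fst (ps!Suc K) - fst (ps!K)\<bar> = 1" using step_K[of K] row_K by simp
  then show ?thesis using final hit X unfolding cross_col_def dglue_K double_def
    by (auto simp: dglue_K split: if_splits; presburger?)
next
  case single
  then show ?thesis using hit by (simp add: cross_col_def)
qed

lemma row_hit_even_col:
  assumes t: "t < N" and X: "even X" and hit: "cross_col X r (walk t) (walk (Suc t)) \<noteq> 0"
  shows "\<exists>m. h < m \<and> m \<le> K \<and> double (ps!m) = (X, r)"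
  using t
proof (cases rule: walk_step_cases)
  case first
  have "\<bar>fst (ps!Suc h) - fst (ps!h)\<bar> = 1" using step_K[of h] first row_h by simp
  then have "double (ps!Suc h) = (X, r)"
    using first hit X unfolding cross_col_def dglue_h double_def by (auto simp: dglue_h split: if_splits; presburger?)
  then show ?thesis using first by (intro exI[of _ "Suc h"]) auto
next
  case inner
  have "\<bar>fst (ps!Suc (h+t)) - fst (ps!(h+t))\<bar> + \<bar>snd (ps!Suc (h+t)) - snd (ps!(h+t))\<bar> = 1"
    using step_K inner by simp
  then have "double (ps!(h+t)) = (X, r) \<or> double (ps!Suc (h+t)) = (X, r)"
    using inner hit X unfolding cross_col_def dglue_def double_def by (auto split: if_splits; presburger?)
  then show ?thesis using inner by (metis Suc_leI add_Suc_right le_add1 less_add_same_cancel1 less_imp_le_nat less_SucI)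
next
  case final
  have "\<bar>fst (ps!Suc K) - fst (ps!K)\<bar> = 1" using step_K[of K] row_K by simp
  then have "double (ps!K) = (X, r)"
    using final hit X unfolding cross_col_def dglue_K double_def by (auto simp: dglue_K split: if_splits; presburger?)
  then show ?thesis using final by (intro exI[of _ K]) auto
next
  case single
  then show ?thesis using hit by (simp add: cross_col_def)
qed

lemma row_crossing_tile:
  assumes t: "t < N" and lev: "odd lev" and c: "(snd (walk t) < lev) \<noteq> (snd (walk (Suc t)) < lev)"
  shows "\<exists>m. h < m \<and> m \<le> K \<and> double (ps!m) = (fst (walk t), lev - 1)"
  using t
proof (cases rule: walk_step_cases)
  case inner
  let ?a = "ps!(h+t)" and ?b = "ps!Suc (h+t)"
  have "\<bar>fst ?b - fst ?a\<bar> + \<bar>snd ?b - snd ?a\<bar> = 1" using step_K inner by simp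
  moreover have "(2 * snd ?a < lev) \<noteq> (2 * snd ?b < lev)" using c inner by (simp add: double_def)
  ultimately have "fst ?b = fst ?a" "lev = 2 * min (snd ?a) (snd ?b) + 1"
    using unit_step_cases lev by (auto elim!: oddE)
  then have "double (ps!(if snd ?a < snd ?b then h+t else Suc (h+t))) = (fst (walk t), lev - 1)"
    using inner by (auto simp: double_def)
  then show ?thesis using inner by (intro exI[of _ "if snd ?a < snd ?b then h+t else Suc (h+t)"]) auto
next
  case first
  then show ?thesis using c row_h by (simp add: dglue_h double_def)
next
  case final
  then show ?thesis using c by (simp add: dglue_K double_def)
next
  case single
  then show ?thesis using c by (simp add: dglue_K)
qed

lemma crossings_col_shift:
  assumes XX: "X \<le> X'" and lev: "odd lev"
    and no_tile: "\<And>m c. h < m \<Longrightarrow> m \<le> K \<Longrightarrow> double (ps!m) = (c, lev - 1) \<Longrightarrow> X < c \<Longrightarrow> c \<le> X' \<Longrightarrow> False"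
    and start: "\<not> (X < fst (dglue ps h) \<and> fst (dglue ps h) \<le> X' \<and> lev < snd (dglue ps h))"
    and finish: "\<not> (X < fst (dglue ps K) \<and> fst (dglue ps K) \<le> X' \<and> snd (dglue ps K) < lev)"
  shows "crossings X lev = crossings X' lev"
proof -
  have "cross_row X lev (walk t) (walk (Suc t)) = cross_row X' lev (walk t) (walk (Suc t))" if t: "t < N" for t
  proof (cases "(snd (walk t) < lev) \<noteq> (snd (walk (Suc t)) < lev)")
    case True
    with row_crossing_tile[OF t lev] obtain m
      where "h < m" "m \<le> K" "double (ps!m) = (fst (walk t), lev - 1)" by blast
    then have "\<not> (X < fst (walk t) \<and> fst (walk t) \<le> X')" using no_tile by blast
    then show ?thesis using XX by (auto simp: cross_row_def)
  qed (auto simp: cross_row_def)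
  then have "(\<Sum>t<N. cross_row X lev (walk t) (walk (Suc t))) = (\<Sum>t<N. cross_row X' lev (walk t) (walk (Suc t)))"
    by (rule sum.cong[OF refl]) simp
  then show ?thesis unfolding crossings_def using start finish XX by auto
qed

lemma crossings_descend:
  assumes lev: "odd lev" and no_hits: "\<And>u. u < s \<Longrightarrow> row_hits X (lev - 2 * int u - 1) = 0"
  shows "even (crossings X lev + crossings X (lev - 2 * int s))"
  using no_hits
proof (induction s)
  case (Suc s)
  have "odd (lev - 2 * int (Suc s))" using lev by simp
  from crossings_row_shift[OF this, of X]
  have "even (crossings X (lev - 2 * int (Suc s)) + crossings X (lev - 2 * int s) + row_hits X (lev - 2 * int s - 1))"
    by (simp add: algebra_simps)
  moreover have "row_hits X (lev - 2 * int s - 1) = 0" using Suc.prems by auto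
  ultimately show ?case using Suc by simp
qed simp

lemma row_hits_odd_col:
  assumes "odd X" "\<And>t. t < N \<Longrightarrow> dglue ps (h+t) \<noteq> (X, r)"
  shows "row_hits X r = 0"
  unfolding row_hits_def using row_hit_odd_col assms by (intro sum.neutral) blast

lemma row_hits_even_col:
  assumes "even X" "\<And>m. h < m \<Longrightarrow> m \<le> K \<Longrightarrow> double (ps!m) \<noteq> (X, r)"
  shows "row_hits X r = 0"
  unfolding row_hits_def using row_hit_even_col assms by (intro sum.neutral) blast

definition "depth = sum_list (map (\<lambda>p. nat \<bar>snd p\<bar>) ps)"

lemma depth_bound: "m < length ps \<Longrightarrow> - int depth \<le> snd (ps!m)"
proof -
  assume m: "m < length ps"
  have "(map (\<lambda>p. nat \<bar>snd p\<bar>) ps) ! m \<le> depth" unfolding depth_def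
    by (rule elem_le_sum_list) (simp add: m)
  then show ?thesis using m by simp
qed

text \<open>Far below the path only the ray going down from glue \<open>h\<close> is crossed.\<close>

lemma crossings_far_below:
  assumes lev: "lev < - 2 * int depth"
  shows "crossings X lev = (if X < fst (dglue ps h) then 1 else 0)"
proof -
  have tile: "- int depth \<le> snd (ps!m)" if "m \<le> Suc K" for m
    using depth_bound Suc_K_less that by auto
  have pair: "lev < snd (ps!m) + snd (ps!n)" if "m \<le> Suc K" "n \<le> Suc K" for m n
    using tile[OF that(1)] tile[OF that(2)] lev by simp
  have above: "lev < snd (walk t)" if "t \<le> N" for t
  proof -
    consider "t = 0" | "0 < t" "t \<le> K - h" | "K - h < t" by linarith
    then show ?thesis
    proof cases
      case 1
      then show ?thesis using pair[of h "Suc h"] h_le_K by (simp add: walk_def dglue_def)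
    next
      case 2
      then show ?thesis using pair[of "h+t" "h+t"] by (simp add: walk_def double_def)
    next
      case 3
      then show ?thesis using pair[of K "Suc K"] by (simp add: walk_def dglue_def)
    qed
  qed
  have "cross_row X lev (walk t) (walk (Suc t)) = 0" if "t < N" for t
    using above[of t] above[of "Suc t"] that by (simp add: cross_row_def)
  then show ?thesis unfolding crossings_def using above[of 0] above[of N] walk_0 walk_N by simp
qed

lemma crossings_column_below:
  assumes X: "odd X" and lv: "odd lv"
    and no_glue: "\<And>t r. t < N \<Longrightarrow> even r \<Longrightarrow> dglue ps (h+t) = (X, r) \<Longrightarrow> lv < r"
  shows "even (crossings X lv + (if X < fst (dglue ps h) then 1 else 0))"
proof -
  define s where "s = nat (lv + 2 * int depth) + 1"
  have low: "lv - 2 * int s < - 2 * int depth" unfolding s_def by (cases "0 \<le> lv + 2 * int depth") simp_all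
  have "even (crossings X lv + crossings X (lv - 2 * int s))"
  proof (rule crossings_descend[OF lv])
    fix u assume "u < s"
    show "row_hits X (lv - 2 * int u - 1) = 0"
    proof (rule row_hits_odd_col[OF X])
      fix t assume "t < N"
      have "even (lv - 2 * int u - 1)" using lv by simp
      from no_glue[OF \<open>t < N\<close> this]
      show "dglue ps (h+t) \<noteq> (X, lv - 2 * int u - 1)" by auto
    qed
  qed
  then show ?thesis using crossings_far_below[OF low] by simp
qed

definition "above_col q = 2 * fst (ps!q)"
definition "above_row q = 2 * snd (ps!q) + 1"
definition "above_crossings q = crossings (above_col q) (above_row q)"

lemma odd_above_row: "odd (above_row q)"
  by (simp add: above_row_def)

lemma dglue_K_not_below:
  assumes q: "q < K" and row: "snd (ps!Suc q) = snd (ps!q)"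
    and col: "fst (dglue ps K) = fst (dglue ps q)" and below: "snd (dglue ps K) < above_row q"
  shows False
proof -
  have "snd (dglue ps K) \<le> snd (dglue ps q)"
    using below by (simp add: dglue_K snd_dglue_row[OF row] above_row_def)
  moreover have "snd (dglue ps q) \<le> snd (dglue ps K)"
    using above_K[OF _ col[symmetric]] q Suc_K_less by simp
  ultimately have "dglue ps q = dglue ps K" using col by (simp add: prod_eq_iff)
  then show False using dglue_K_inj[of q K] q by simp
qed

text \<open>
  The point above a tile \<open>q \<le> h\<close> can be moved horizontally to the glue \<open>q\<close>, and for \<open>q < h\<close>
  on to the point above tile \<open>q + 1\<close>, without crossing the curve.
\<close>

lemma crossings_along_horizontal_step:
  assumes q: "q \<le> h" "q < K" and row: "snd (ps!Suc q) = snd (ps!q)"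
    and X: "X = fst (dglue ps q) \<or> (q < h \<and> X = above_col (Suc q))"
  shows "above_crossings q = crossings X (above_row q)"
proof -
  define a b where "a = fst (ps!q)" and "b = fst (ps!Suc q)"
  have ab: "\<bar>b - a\<bar> = 1" using step_K[of q] q row by (simp add: a_def b_def)
  have X': "X = a + b \<or> X = 2 * b" and X_Suc: "X = 2 * b \<Longrightarrow> q < h"
    using X ab by (auto simp: a_def b_def dglue_def above_col_def)
  define lo hi where "lo = min (2 * a) X" and "hi = max (2 * a) X"
  have "crossings lo (above_row q) = crossings hi (above_row q)"
  proof (rule crossings_col_shift)
    show "lo \<le> hi" "odd (above_row q)" by (simp_all add: lo_def hi_def odd_above_row)
  next
    fix m c assume m: "h < m" "m \<le> K" and tile: "double (ps!m) = (c, above_row q - 1)"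
      and c: "lo < c" "c \<le> hi"
    have c_eq: "c = 2 * fst (ps!m)" and y: "snd (ps!m) = snd (ps!q)"
      using tile by (auto simp: double_def above_row_def)
    have "fst (ps!m) = a \<or> (fst (ps!m) = b \<and> X = 2 * b)"
      by (rule even_in_unit_strip[OF ab X']) (use c c_eq lo_def hi_def in simp_all)
    moreover have "ps!m \<noteq> ps!q" using lattice_path_nth_inj[OF path, of m q] m q Suc_K_less by force
    moreover have "ps!m \<noteq> ps!Suc q" if "q < h"
      using lattice_path_nth_inj[OF path, of m "Suc q"] m that Suc_K_less by force
    ultimately show False using y row X_Suc by (auto simp: a_def b_def prod_eq_iff)
  next
    show "\<not> (lo < fst (dglue ps h) \<and> fst (dglue ps h) \<le> hi \<and> above_row q < snd (dglue ps h))"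
    proof
      assume glue_h: "lo < fst (dglue ps h) \<and> fst (dglue ps h) \<le> hi \<and> above_row q < snd (dglue ps h)"
      have "fst (dglue ps h) = a + b"
        using odd_in_unit_strip[OF ab X' odd_fst_dglue[OF path _ row_h]] glue_h h_le_K Suc_K_less
        by (simp add: lo_def hi_def)
      then have "snd (dglue ps h) \<le> snd (dglue ps q)"
        using below_h[of q] q Suc_K_less by (simp add: dglue_def a_def b_def)
      then show False using glue_h snd_dglue_row[OF row] by (simp add: above_row_def)
    qed
  next
    show "\<not> (lo < fst (dglue ps K) \<and> fst (dglue ps K) \<le> hi \<and> snd (dglue ps K) < above_row q)"
    proof
      assume glue_K: "lo < fst (dglue ps K) \<and> fst (dglue ps K) \<le> hi \<and> snd (dglue ps K) < above_row q"
      have "fst (dglue ps K) = fst (dglue ps q)"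
        using odd_in_unit_strip[OF ab X' odd_fst_dglue_K] glue_K
        by (simp add: lo_def hi_def dglue_def a_def b_def)
      then show False using dglue_K_not_below[OF q(2) row] glue_K by simp
    qed
  qed
  then show ?thesis
    by (cases "2 * a \<le> X") (simp_all add: above_crossings_def above_col_def a_def lo_def hi_def)
qed

lemma crossings_along_vertical_step:
  assumes q: "q < h" and col: "fst (ps!Suc q) = fst (ps!q)"
  shows "even (above_crossings q + above_crossings (Suc q))"
proof -
  define y0 y1 where "y0 = snd (ps!q)" and "y1 = snd (ps!Suc q)"
  have y: "y1 = y0 + 1 \<or> y1 = y0 - 1" using step_K[of q] q h_le_K col by (simp add: y0_def y1_def) linarith
  define lo where "lo = 2 * min y0 y1 + 1"
  have odd_lo: "odd lo" by (simp add: lo_def)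
  have rows: "{above_row q, above_row (Suc q)} = {lo, lo + 2}"
    using y by (auto simp: lo_def above_row_def y0_def y1_def)
  have "row_hits (above_col q) (lo + 1) = 0"
  proof (rule row_hits_even_col)
    show "even (above_col q)" by (simp add: above_col_def)
    fix m assume m: "h < m" "m \<le> K"
    show "double (ps!m) \<noteq> (above_col q, lo + 1)"
    proof
      assume "double (ps!m) = (above_col q, lo + 1)"
      then have "fst (ps!m) = fst (ps!q)" "snd (ps!m) = max y0 y1"
        using y by (auto simp: double_def above_col_def lo_def)
      then have "ps!m = ps!q \<or> ps!m = ps!Suc q"
        using col by (auto simp: y0_def y1_def max_def prod_eq_iff)
      moreover have "ps!m \<noteq> ps!q" using lattice_path_nth_inj[OF path, of m q] m q h_le_K Suc_K_less by force
      moreover have "ps!m \<noteq> ps!Suc q"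
        using lattice_path_nth_inj[OF path, of m "Suc q"] m q h_le_K Suc_K_less by force
      ultimately show False by blast
    qed
  qed
  then have "even (crossings (above_col q) lo + crossings (above_col q) (lo + 2))"
    using crossings_row_shift[OF odd_lo, of "above_col q"] by simp
  moreover have "above_col (Suc q) = above_col q" using col by (simp add: above_col_def)
  ultimately show ?thesis
    using rows unfolding above_crossings_def doubleton_eq_iff by (auto simp: add.commute)
qed

lemma above_crossings_step:
  assumes q: "q < h"
  shows "even (above_crossings q + above_crossings (Suc q))"
proof (cases "snd (ps!Suc q) = snd (ps!q)")
  case True
  then have "above_crossings q = crossings (above_col (Suc q)) (above_row q)"
    using crossings_along_horizontal_step[of q] q h_le_K by simp
  moreover have "above_row (Suc q) = above_row q" using True by (simp add: above_row_def)
  ultimately show ?thesis by (simp add: above_crossings_def)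
next
  case False
  then have "fst (ps!Suc q) = fst (ps!q)" using step_K[of q] q h_le_K by auto
  then show ?thesis using crossings_along_vertical_step q by simp
qed

lemma above_crossings_chain:
  assumes "l \<le> h"
  shows "even (above_crossings l + above_crossings h)"
  using assms
proof (induction rule: inc_induct)
  case (step q)
  then show ?case using above_crossings_step[of q] by presburger
qed simp

text \<open>Only the first half step of the walk crosses the column of glue \<open>h\<close> on its row.\<close>

lemma row_hits_glue_h:
  assumes hK: "h < K"
  shows "row_hits (fst (dglue ps h)) (snd (dglue ps h)) = (if fst (ps!Suc h) = fst (ps!h) + 1 then 1 else 0)"
proof -
  let ?X = "fst (dglue ps h)" and ?r = "snd (dglue ps h)"
  have odd_X: "odd ?X" using odd_fst_dglue[OF path _ row_h] h_le_K Suc_K_less by simp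
  have later: "cross_col ?X ?r (walk (Suc t)) (walk (Suc (Suc t))) = 0" if t: "t < K - h" for t
  proof (rule ccontr)
    assume "cross_col ?X ?r (walk (Suc t)) (walk (Suc (Suc t))) \<noteq> 0"
    then have "dglue ps (h + Suc t) = dglue ps h" using row_hit_odd_col[of "Suc t"] t odd_X by (simp add: N_def)
    moreover have "h + Suc t \<le> K" using t by linarith
    ultimately show False using dglue_K_inj[of "h + Suc t" h] h_le_K by simp
  qed
  have N: "N = Suc (K - h)" by (simp add: N_def)
  have "row_hits ?X ?r = cross_col ?X ?r (walk 0) (walk (Suc 0))"
    unfolding row_hits_def N sum.lessThan_Suc_shift using later by simp
  also have "\<dots> = (if fst (ps!Suc h) = fst (ps!h) + 1 then 1 else 0)"
    using step_K[of h] h_le_K row_h hK by (auto simp: walk_def cross_col_def dglue_def double_def)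
  finally show ?thesis .
qed

lemma above_crossings_h: "even (above_crossings h + (if fst (ps!Suc h) = fst (ps!h) + 1 then 1 else 0))"
proof (cases "h < K")
  case True
  let ?X = "fst (dglue ps h)"
  define lv where "lv = above_row h - 2"
  have odd_lv: "odd lv" by (simp add: lv_def odd_above_row)
  have "lv + 2 = above_row h" "lv + 1 = snd (dglue ps h)"
    using snd_dglue_row[OF row_h] by (simp_all add: lv_def above_row_def)
  then have shift: "even (crossings ?X lv + crossings ?X (above_row h) + row_hits ?X (snd (dglue ps h)))"
    using crossings_row_shift[OF odd_lv, of ?X] by simp
  have "even (crossings ?X lv + (if ?X < ?X then 1 else 0))"
  proof (rule crossings_column_below[OF _ odd_lv])
    show "odd ?X" using odd_fst_dglue[OF path _ row_h] h_le_K Suc_K_less by simp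
    fix t r assume "t < N" and glue: "dglue ps (h+t) = (?X, r)"
    then have "snd (dglue ps h) \<le> r" using below_h[of "h+t"] h_le_K Suc_K_less by (simp add: N_def)
    then show "lv < r" using \<open>lv + 1 = snd (dglue ps h)\<close> by simp
  qed
  moreover have "above_crossings h = crossings ?X (above_row h)"
    using crossings_along_horizontal_step[of h] True row_h by simp
  ultimately show ?thesis using shift row_hits_glue_h[OF True] by presburger
next
  case False
  then have "K = h" using h_le_K by simp
  then have "N = 1" "walk (Suc 0) = dglue ps h" by (simp_all add: N_def walk_def)
  then show ?thesis
    using step_K[of h] h_le_K row_h \<open>K = h\<close>
    by (auto simp: above_crossings_def crossings_def above_col_def above_row_def cross_row_def walk_0 dglue_def)
qed

lemma crossings_glue_l:
  assumes l: "l < h" and vis_l: "visible_below ps l"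
  shows "even (crossings (fst (dglue ps l)) (above_row l) + (if fst (dglue ps l) < fst (dglue ps h) then 1 else 0))"
proof (rule crossings_column_below[OF _ odd_above_row])
  have row: "snd (ps!Suc l) = snd (ps!l)" using vis_l by (simp add: visible_below_def)
  show "odd (fst (dglue ps l))" using odd_fst_dglue[OF path _ row] l h_le_K Suc_K_less by simp
  fix t r assume t: "t < N" and "even r" and glue: "dglue ps (h+t) = (fst (dglue ps l), r)"
  have ht: "h + t \<le> K" using t h_le_K by (simp add: N_def)
  then have "Suc (h+t) < length ps" using Suc_K_less by simp
  then have "snd (dglue ps l) \<le> r" using vis_l glue unfolding visible_below_def by (metis fst_conv snd_conv)
  moreover have "dglue ps (h+t) \<noteq> dglue ps l" using dglue_K_inj[OF ht, of l] l h_le_K by auto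
  ultimately show "above_row l < r"
    using glue \<open>even r\<close> snd_dglue_row[OF row] by (auto simp: above_row_def prod_eq_iff elim!: evenE)
qed

lemma east_iff_left_glue:
  assumes l: "l < h" and vis_l: "visible_below ps l"
  shows "fst (ps!Suc h) = fst (ps!h) + 1 \<longleftrightarrow> fst (dglue ps l) < fst (dglue ps h)"
proof -
  have "snd (ps!Suc l) = snd (ps!l)" using vis_l by (simp add: visible_below_def)
  then have "above_crossings l = crossings (fst (dglue ps l)) (above_row l)"
    using crossings_along_horizontal_step[of l] l h_le_K by simp
  then show ?thesis
    using above_crossings_chain[of l] above_crossings_h crossings_glue_l[OF l vis_l] l
    by (auto split: if_splits; presburger)
qed

end

section \<open>Order of the glues visible from below\<close>

definition steps :: "dir \<Rightarrow> (int \<times> int) list \<Rightarrow> nat \<Rightarrow> bool" where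
  "steps d ps m \<longleftrightarrow> ps!Suc m = shift (ps!m) d"

lemma steps_East_iff: "snd (ps!Suc m) = snd (ps!m) \<Longrightarrow> steps East ps m \<longleftrightarrow> fst (ps!Suc m) = fst (ps!m) + 1"
  and steps_West_iff: "snd (ps!Suc m) = snd (ps!m) \<Longrightarrow> steps West ps m \<longleftrightarrow> fst (ps!Suc m) = fst (ps!m) - 1"
  by (auto simp: steps_def shift_def prod_eq_iff)

lemma steps_East_iff_left_glue:
  assumes "lattice_path ps" "2 \<le> length ps" "visible_above ps (length ps - 2)"
    and "l < h" "h \<le> length ps - 2" "visible_below ps l" "visible_below ps h"
  shows "steps East ps h \<longleftrightarrow> fst (dglue ps l) < fst (dglue ps h)"
proof -
  interpret visible_glue_curve ps h
    using assms by unfold_locales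
  show ?thesis using east_iff_left_glue[OF assms(4,6)] steps_East_iff[OF row_h] by simp
qed

lemma visible_below_same_col:
  assumes path: "lattice_path ps" and i: "Suc i < length ps" and j: "Suc j < length ps"
    and "visible_below ps i" "visible_below ps j" and "fst (dglue ps i) = fst (dglue ps j)"
  shows "i = j"
proof -
  have "snd (dglue ps i) = snd (dglue ps j)"
    using assms by (simp add: visible_below_def order_antisym)
  then show ?thesis using dglue_inj[OF path i j] assms(6) by (simp add: prod_eq_iff)
qed

lemma visible_below_glues_order:
  assumes path: "lattice_path ps" and len: "2 \<le> length ps" and last: "visible_above ps (length ps - 2)"
    and i: "i \<le> length ps - 2" and j: "j \<le> length ps - 2"
    and vis_i: "visible_below ps i" and vis_j: "visible_below ps j"
  shows "(steps East ps i \<and> fst (ps!i) < fst (ps!j) \<longrightarrow> i < j \<and> steps East ps j)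
       \<and> (steps West ps i \<and> fst (ps!j) < fst (ps!i) \<longrightarrow> i < j \<and> steps West ps j)"
proof -
  note east_iff = steps_East_iff_left_glue[OF path len last]
  have li: "Suc i < length ps" and lj: "Suc j < length ps" using i j len by auto
  have row_i: "snd (ps!Suc i) = snd (ps!i)" and row_j: "snd (ps!Suc j) = snd (ps!j)"
    using vis_i vis_j by (simp_all add: visible_below_def)
  have x_j: "fst (ps!Suc j) = fst (ps!j) + 1 \<or> fst (ps!Suc j) = fst (ps!j) - 1"
    using lattice_path_horizontal_step[OF path lj row_j] by linarith
  have ne: "fst (dglue ps i) \<noteq> fst (dglue ps j)" if "i \<noteq> j"
    using visible_below_same_col[OF path li lj vis_i vis_j] that by blast
  show ?thesis
  proof (intro conjI impI; elim conjE)
    assume east: "steps East ps i" and x: "fst (ps!i) < fst (ps!j)"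
    then have "i \<noteq> j" by auto
    then have left: "fst (dglue ps i) < fst (dglue ps j)"
      using east x x_j ne steps_East_iff[OF row_i] by (auto simp: dglue_def)
    then have "\<not> j < i" using east_iff[of j i] i vis_i vis_j east by auto
    with \<open>i \<noteq> j\<close> have "i < j" by simp
    then show "i < j" "steps East ps j" using east_iff[of i j] left j vis_i vis_j by auto
  next
    assume west: "steps West ps i" and x: "fst (ps!j) < fst (ps!i)"
    then have "i \<noteq> j" by auto
    then have right: "fst (dglue ps j) < fst (dglue ps i)"
      using west x x_j ne steps_West_iff[OF row_i] by (auto simp: dglue_def)
    then have "\<not> j < i"
      using east_iff[of j i] i vis_i vis_j west steps_East_iff[OF row_i] steps_West_iff[OF row_i] by auto
    with \<open>i \<noteq> j\<close> have "i < j" by simp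
    then show "i < j" "steps West ps j"
      using east_iff[of i j] right j vis_i vis_j x_j steps_East_iff[OF row_j] steps_West_iff[OF row_j] by auto
  qed
qed

section \<open>From tile paths to lattice paths\<close>

lemma lattice_path_map_fst:
  assumes "is_path P"
  shows "lattice_path (map fst P)"
  unfolding lattice_path_def
proof (intro conjI allI impI)
  show "distinct (map fst P)" using assms by (simp add: is_path_def)
  fix m assume m: "Suc m < length (map fst P)"
  then obtain d where "fst (P!Suc m) = shift (fst (P!m)) d"
    using assms unfolding is_path_def interacts_def by auto
  then show "\<bar>fst (map fst P ! Suc m) - fst (map fst P ! m)\<bar> + \<bar>snd (map fst P ! Suc m) - snd (map fst P ! m)\<bar> = 1"
    using m by (cases d) (auto simp: shift_def)
qed

lemma glue_pos_dglue:
  "Suc m < length P \<Longrightarrow> glue_pos P m = (of_int (fst (dglue (map fst P) m)) / 2, of_int (snd (dglue (map fst P) m)) / 2)"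
  by (simp add: glue_pos_def midpoint_def rp_def dglue_def prod_eq_iff)

lemma glue_pos_in_emb: "Suc m < length P \<Longrightarrow> glue_pos P m \<in> emb P"
  unfolding emb_def glue_pos_def by auto

lemma glue_pos_same_col:
  assumes "Suc m < length P" "Suc n < length P" "fst (dglue (map fst P) n) = fst (dglue (map fst P) m)"
  shows "glue_pos P n = (fst (glue_pos P m),
           snd (glue_pos P m) + of_int (snd (dglue (map fst P) n) - snd (dglue (map fst P) m)) / 2)"
  using assms by (simp add: glue_pos_dglue diff_divide_distrib)

lemma visible_below_map_fst:
  assumes vis: "visible_south \<sigma> P m" and m: "Suc m < length P"
  shows "visible_below (map fst P) m"
  unfolding visible_below_def
proof (intro conjI allI impI)
  show "snd (map fst P ! Suc m) = snd (map fst P ! m)"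
    using vis m by (auto simp: visible_south_def glue_points_def shift_def)
  fix n assume n: "Suc n < length (map fst P)" and col: "fst (dglue (map fst P) n) = fst (dglue (map fst P) m)"
  show "snd (dglue (map fst P) m) \<le> snd (dglue (map fst P) n)"
  proof (rule ccontr)
    assume lower: "\<not> snd (dglue (map fst P) m) \<le> snd (dglue (map fst P) n)"
    define t :: real where "t = of_int (snd (dglue (map fst P) m) - snd (dglue (map fst P) n)) / 2"
    have "t > 0" using lower by (simp add: t_def)
    moreover have "glue_pos P n = (fst (glue_pos P m), snd (glue_pos P m) - t)"
      using glue_pos_same_col[OF m _ col] n by (simp add: t_def field_simps)
    ultimately show False using vis glue_pos_in_emb[of n P] n unfolding visible_south_def by force
  qed
qed

lemma visible_above_map_fst:
  assumes vis: "visible_north \<sigma> P m" and m: "Suc m < length P"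
  shows "visible_above (map fst P) m"
  unfolding visible_above_def
proof (intro conjI allI impI)
  show "snd (map fst P ! Suc m) = snd (map fst P ! m)"
    using vis m by (auto simp: visible_north_def glue_points_def shift_def)
  fix n assume n: "Suc n < length (map fst P)" and col: "fst (dglue (map fst P) n) = fst (dglue (map fst P) m)"
  show "snd (dglue (map fst P) n) \<le> snd (dglue (map fst P) m)"
  proof (rule ccontr)
    assume higher: "\<not> snd (dglue (map fst P) n) \<le> snd (dglue (map fst P) m)"
    define t :: real where "t = of_int (snd (dglue (map fst P) n) - snd (dglue (map fst P) m)) / 2"
    have "t > 0" using higher by (simp add: t_def)
    moreover have "glue_pos P n = (fst (glue_pos P m), snd (glue_pos P m) + t)"
      using glue_pos_same_col[OF m _ col] n by (simp add: t_def field_simps)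
    ultimately show False using vis glue_pos_in_emb[of n P] n unfolding visible_north_def by force
  qed
qed

theorem mainTheorem2:
  fixes T :: "'g tiletype set" and \<sigma> :: "'g assembly" and P :: "'g tile list" and i j :: nat
  assumes "is_tas T \<sigma>"
    and "producible_path T \<sigma> P"
    and "length P \<ge> 2"
    and "visible_north \<sigma> P (length P - 2)"
    and "i \<le> length P - 2" and "j \<le> length P - 2"
  shows "(visible_south \<sigma> P i \<and> visible_south \<sigma> P j \<and> glue_points East P i
            \<and> fst (fst (P ! i)) < fst (fst (P ! j))
          \<longrightarrow> i < j \<and> glue_points East P j)
       \<and> (visible_south \<sigma> P i \<and> visible_south \<sigma> P j \<and> glue_points West P i
            \<and> fst (fst (P ! i)) > fst (fst (P ! j))
          \<longrightarrow> i < j \<and> glue_points West P j)"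
proof -
  let ?ps = "map fst P"
  have path: "lattice_path ?ps" using assms(2) lattice_path_map_fst unfolding producible_path_def by blast
  have last: "visible_above ?ps (length ?ps - 2)" using visible_above_map_fst[OF assms(4)] assms(3) by simp
  have tiles: "?ps!m = fst (P!m)" "glue_points d P m \<longleftrightarrow> steps d ?ps m" if "m \<le> length P - 2" for d m
    using that assms(3) by (simp_all add: glue_points_def steps_def)
  have below: "visible_below ?ps m" if "visible_south \<sigma> P m" "m \<le> length P - 2" for m
    using visible_below_map_fst[OF that(1)] that(2) assms(3) by simp
  show ?thesis
    using visible_below_glues_order[OF path _ last, of i j] below[of i] below[of j]
      tiles[of i] tiles[of j] assms(3,5,6) by auto
qed

end
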